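(* Let $N\ge1$, $1\le S\le N$, $L$ a band-width vector, $\dot W$ an $L$-admissible matrix, $W_\varepsilon=\mathrm{Id}+\varepsilon\dot W$, $\beta\in\Gamma$, $\alpha$ the $S$-banded vector with band vector $\beta$ and band-width vector $L$, $\mathcal P_\varepsilon$ the associated transfer operator, and $k\in\mathbb Z$. Assume $S=1$ or $k=0$. Let $\{f^{(1)}_k,\dots,f^{(N)}_k\}$ be an orthonormal eigenbasis of $e^{-2\pi ik\beta_1}\dot W$ with corresponding eigenvalues $\hat\lambda^{(1)}_k,\dots,\hat\lambda^{(N)}_k$. Then for every $\varepsilon>0$ and every $\ell$, $F^{(\ell)}_k(j,x)=f^{(\ell)}_k(j)e^{2\pi ikx}$ is an eigenfunction of $\mathcal P_\varepsilon$ with eigenvalue $\lambda^{(\ell)}_{k,\varepsilon}=e^{-2\pi ik\beta_1}+\varepsilon\hat\lambda^{(\ell)}_k$, and these are (up to scalar multiples) all eigenfunctions of $\mathcal P_\varepsilon$ of the form $f(j)e^{2\pi ikx}$. In particular, the $L^2(M)$-orthogonal projection $\Pi^{(\ell)}_{k,\varepsilon}$ onto the eigenfunction with eigenvalue $\lambda^{(\ell)}_{k,\varepsilon}$ equals, for every $\varepsilon>0$, the $L^2(M)$-orthogonal projection $\Pi^{(\ell)}_k$ onto $\operatorname{span}\{F^{(\ell)}_k\}$.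
   Context: $\mathbb S^1=\mathbb R/\mathbb Z$, $M=\{1,\dots,N\}\times\mathbb S^1$ with the product of the uniform probability and Lebesgue measure; $L^2(M)$ complex. For $\alpha\in\mathbb R^N$, $(\mathcal P_\varepsilon F)(j,x)=\sum_{j'=1}^N(W_\varepsilon)_{jj'}F(j',x-\alpha_j)$. A band-width vector is $L=(L_1,\dots,L_S)$ of positive integers with $\sum_sL_s=N$; $N_0=0$, $N_s=N_{s-1}+L_s$, $B_s=\{j:N_{s-1}<j\le N_s\}$; for distinct reals $\beta_1,\dots,\beta_S$ the $S$-banded vector $\alpha$ has $\alpha_j=\beta_s$ for $j\in B_s$. $\dot W$ is $L$-admissible if it is real symmetric and (1) $\dot W_{ij}\ge0$ for $i\ne j$, $\sum_j\dot W_{ij}=0$ for all $i$; (2) $\dot W$ has $N$ distinct eigenvalues; (3) each $\hat W_s=(\dot W_{jk})_{j,k\in B_s}$ has $L_s$ distinct eigenvalues. $\Gamma=\{\beta\in\mathbb R^S: e^{-2\pi ik\beta_{s_1}}\neq e^{-2\pi ik\beta_{s_2}}\text{ for all }k\ne0,\ s_1\ne s_2\}$. *)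

theory Defs
  imports "HOL-Analysis.Analysis"
begin

text \<open>Indices j of the space M = {1..N} x S^1 are natural numbers in {1..N}; functions on M
  are represented as maps nat => real => complex, the second argument being a real number
  read modulo 1 (all functions considered are 1-periodic in x).\<close>

definition band_width :: "nat \<Rightarrow> nat \<Rightarrow> (nat \<Rightarrow> nat) \<Rightarrow> bool" where
  "band_width N S L \<longleftrightarrow> (\<forall>s\<in>{1..S}. 0 < L s) \<and> (\<Sum>s=1..S. L s) = N"

definition band_end :: "(nat \<Rightarrow> nat) \<Rightarrow> nat \<Rightarrow> nat" where
  "band_end L s = (\<Sum>i=1..s. L i)"

definition band :: "(nat \<Rightarrow> nat) \<Rightarrow> nat \<Rightarrow> nat set" where
  "band L s = {j. band_end L (s - 1) < j \<and> j \<le> band_end L s}"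

definition is_eigenvalue_on :: "nat set \<Rightarrow> (nat \<Rightarrow> nat \<Rightarrow> real) \<Rightarrow> real \<Rightarrow> bool" where
  "is_eigenvalue_on I A mu \<longleftrightarrow>
     (\<exists>v::nat \<Rightarrow> real. (\<exists>i\<in>I. v i \<noteq> 0) \<and> (\<forall>i\<in>I. (\<Sum>j\<in>I. A i j * v j) = mu * v i))"

definition has_distinct_eigenvalues_on :: "nat set \<Rightarrow> (nat \<Rightarrow> nat \<Rightarrow> real) \<Rightarrow> bool" where
  "has_distinct_eigenvalues_on I A \<longleftrightarrow> card {mu. is_eigenvalue_on I A mu} = card I"

definition admissible :: "nat \<Rightarrow> nat \<Rightarrow> (nat \<Rightarrow> nat) \<Rightarrow> (nat \<Rightarrow> nat \<Rightarrow> real) \<Rightarrow> bool" where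
  "admissible N S L Wd \<longleftrightarrow>
     (\<forall>i\<in>{1..N}. \<forall>j\<in>{1..N}. Wd i j = Wd j i) \<and>
     (\<forall>i\<in>{1..N}. \<forall>j\<in>{1..N}. i \<noteq> j \<longrightarrow> 0 \<le> Wd i j) \<and>
     (\<forall>i\<in>{1..N}. (\<Sum>j=1..N. Wd i j) = 0) \<and>
     has_distinct_eigenvalues_on {1..N} Wd \<and>
     (\<forall>s\<in>{1..S}. has_distinct_eigenvalues_on (band L s) Wd)"

definition Gamma_set :: "nat \<Rightarrow> (nat \<Rightarrow> real) set" where
  "Gamma_set S = {\<beta>. \<forall>k::int. k \<noteq> 0 \<longrightarrow> (\<forall>s1\<in>{1..S}. \<forall>s2\<in>{1..S}. s1 \<noteq> s2 \<longrightarrow>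
       cis (- 2 * pi * of_int k * \<beta> s1) \<noteq> cis (- 2 * pi * of_int k * \<beta> s2))}"

definition banded :: "nat \<Rightarrow> (nat \<Rightarrow> nat) \<Rightarrow> (nat \<Rightarrow> real) \<Rightarrow> (nat \<Rightarrow> real) \<Rightarrow> bool" where
  "banded S L \<beta> \<alpha> \<longleftrightarrow> (\<forall>s\<in>{1..S}. \<forall>j\<in>band L s. \<alpha> j = \<beta> s)"

definition W_eps :: "real \<Rightarrow> (nat \<Rightarrow> nat \<Rightarrow> real) \<Rightarrow> nat \<Rightarrow> nat \<Rightarrow> real" where
  "W_eps \<epsilon> Wd i j = (if i = j then 1 else 0) + \<epsilon> * Wd i j"

definition transfer_op ::
  "nat \<Rightarrow> (nat \<Rightarrow> nat \<Rightarrow> real) \<Rightarrow> (nat \<Rightarrow> real) \<Rightarrow> (nat \<Rightarrow> real \<Rightarrow> complex) \<Rightarrow> nat \<Rightarrow> real \<Rightarrow> complex" where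
  "transfer_op N W \<alpha> F j x = (\<Sum>j'=1..N. complex_of_real (W j j') * F j' (x - \<alpha> j))"

definition is_eigenfunction ::
  "nat \<Rightarrow> ((nat \<Rightarrow> real \<Rightarrow> complex) \<Rightarrow> nat \<Rightarrow> real \<Rightarrow> complex) \<Rightarrow> (nat \<Rightarrow> real \<Rightarrow> complex) \<Rightarrow> complex \<Rightarrow> bool" where
  "is_eigenfunction N P F mu \<longleftrightarrow>
     (\<exists>j\<in>{1..N}. \<exists>x. F j x \<noteq> 0) \<and> (\<forall>j\<in>{1..N}. \<forall>x. P F j x = mu * F j x)"

definition fourier_fun :: "(nat \<Rightarrow> complex) \<Rightarrow> int \<Rightarrow> nat \<Rightarrow> real \<Rightarrow> complex" where
  "fourier_fun f k j x = f j * cis (2 * pi * of_int k * x)"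

text \<open>L^2(M) inner product (uniform probability on {1..N} times Lebesgue on [0,1]).\<close>
definition L2_inner :: "nat \<Rightarrow> (nat \<Rightarrow> real \<Rightarrow> complex) \<Rightarrow> (nat \<Rightarrow> real \<Rightarrow> complex) \<Rightarrow> complex" where
  "L2_inner N F G = (\<Sum>j=1..N. integral {0..1} (\<lambda>x. F j x * cnj (G j x))) / of_nat N"

definition L2_proj :: "nat \<Rightarrow> (nat \<Rightarrow> real \<Rightarrow> complex) \<Rightarrow> (nat \<Rightarrow> real \<Rightarrow> complex) \<Rightarrow> nat \<Rightarrow> real \<Rightarrow> complex" where
  "L2_proj N G H j x = (L2_inner N H G / L2_inner N G G) * G j x"

end

(* On functions f(j) e^{2 pi i k x} the transfer operator acts as e^{-2 pi i k beta_1} (Id + eps Wd)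
   on f, because for S = 1 or k = 0 every shift alpha_j produces the same phase. Hence its
   eigenfunctions of this form come exactly from eigenvectors of the real symmetric matrix Wd.
   Expanding an eigenvector in the orthonormal eigenbasis f^(l), self-adjointness kills every
   coefficient belonging to a different eigenvalue; as Wd has N distinct eigenvalues, these are
   all coefficients but one, so the eigenvector is a multiple of a single f^(l). A nonzero
   multiple spans the same line and therefore has the same orthogonal projection. *)
theory Submission
  imports Defs "Jordan_Normal_Form.Determinant"
begin

definition vec_inner :: "nat \<Rightarrow> (nat \<Rightarrow> complex) \<Rightarrow> (nat \<Rightarrow> complex) \<Rightarrow> complex" where
  "vec_inner N u v = (\<Sum>j=1..N. u j * cnj (v j))"

definition mat_vec :: "nat \<Rightarrow> (nat \<Rightarrow> nat \<Rightarrow> real) \<Rightarrow> (nat \<Rightarrow> complex) \<Rightarrow> nat \<Rightarrow> complex" where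
  "mat_vec N A v i = (\<Sum>j=1..N. complex_of_real (A i j) * v j)"

definition orthonormal_on :: "nat \<Rightarrow> (nat \<Rightarrow> nat \<Rightarrow> complex) \<Rightarrow> bool" where
  "orthonormal_on N f \<longleftrightarrow>
     (\<forall>l\<in>{1..N}. \<forall>m\<in>{1..N}. vec_inner N (f l) (f m) = (if l = m then 1 else 0))"

lemma vec_inner_cong:
  assumes "\<And>j. j \<in> {1..N} \<Longrightarrow> u j = u' j" "\<And>j. j \<in> {1..N} \<Longrightarrow> v j = v' j"
  shows "vec_inner N u v = vec_inner N u' v'"
  using assms unfolding vec_inner_def by (intro sum.cong) auto

lemma vec_inner_scale_left: "vec_inner N (\<lambda>j. c * u j) v = c * vec_inner N u v"
  by (simp add: vec_inner_def sum_distrib_left mult.assoc)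

lemma vec_inner_scale_right: "vec_inner N u (\<lambda>j. c * v j) = cnj c * vec_inner N u v"
  by (simp add: vec_inner_def sum_distrib_left mult_ac)

lemma mat_vec_cong:
  assumes "\<And>j. j \<in> {1..N} \<Longrightarrow> v j = v' j"
  shows "mat_vec N A v i = mat_vec N A v' i"
  using assms unfolding mat_vec_def by (intro sum.cong) auto

lemma mat_vec_scale: "mat_vec N A (\<lambda>j. c * v j) i = c * mat_vec N A v i"
  by (simp add: mat_vec_def sum_distrib_left mult_ac)

text \<open>A square matrix with orthonormal rows also has orthonormal columns, since a
  one-sided inverse of a square matrix is two-sided.\<close>
lemma orthonormal_on_dual:
  assumes orth: "orthonormal_on N f" and "i \<in> {1..N}" "j \<in> {1..N}"
  shows "(\<Sum>l=1..N. cnj (f l i) * f l j) = (if i = j then 1 else 0)"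
proof -
  define A where "A = Matrix.mat N N (\<lambda>(l, j). f (Suc l) (Suc j))"
  define B where "B = Matrix.mat N N (\<lambda>(j, m). cnj (f (Suc m) (Suc j)))"
  have A: "A \<in> carrier_mat N N" and B: "B \<in> carrier_mat N N"
    by (auto simp: A_def B_def)
  have "A * B = 1\<^sub>m N"
  proof (rule eq_matI)
    fix a b assume ab: "a < dim_row (1\<^sub>m N)" "b < dim_col (1\<^sub>m N)"
    have "(A * B) $$ (a, b) = vec_inner N (f (Suc a)) (f (Suc b))"
      using ab by (auto simp: A_def B_def scalar_prod_def vec_inner_def
          sum.atLeast1_atMost_eq lessThan_atLeast0 intro!: sum.cong)
    then show "(A * B) $$ (a, b) = 1\<^sub>m N $$ (a, b)"
      using orth ab by (auto simp: orthonormal_on_def)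
  qed (auto simp: A_def B_def)
  then have "B * A = 1\<^sub>m N"
    using mat_mult_left_right_inverse[OF A B] by blast
  moreover have "(B * A) $$ (i - 1, j - 1) = (\<Sum>l=1..N. cnj (f l i) * f l j)"
    using assms by (auto simp: A_def B_def scalar_prod_def
        sum.atLeast1_atMost_eq lessThan_atLeast0 intro!: sum.cong)
  moreover have "i - 1 = j - 1 \<longleftrightarrow> i = j"
    using assms by auto
  ultimately show ?thesis
    using assms by auto
qed

lemma orthonormal_on_expansion:
  assumes orth: "orthonormal_on N f" and j: "j \<in> {1..N}"
  shows "g j = (\<Sum>l=1..N. vec_inner N g (f l) * f l j)"
proof -
  have "(\<Sum>l=1..N. vec_inner N g (f l) * f l j)
      = (\<Sum>l=1..N. \<Sum>i=1..N. g i * (cnj (f l i) * f l j))"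
    by (simp add: vec_inner_def sum_distrib_right mult.assoc)
  also have "\<dots> = (\<Sum>i=1..N. g i * (\<Sum>l=1..N. cnj (f l i) * f l j))"
    by (subst sum.swap) (simp add: sum_distrib_left)
  also have "\<dots> = (\<Sum>i=1..N. if i = j then g i else 0)"
    using orthonormal_on_dual[OF orth _ j] by (intro sum.cong) auto
  also have "\<dots> = g j"
    using j by simp
  finally show ?thesis ..
qed

lemma orthonormal_on_nonzero:
  assumes "orthonormal_on N f" "l \<in> {1..N}"
  shows "\<exists>j\<in>{1..N}. f l j \<noteq> 0"
proof (rule ccontr)
  assume "\<not> ?thesis"
  then have "vec_inner N (f l) (f l) = 0"
    by (simp add: vec_inner_def)
  then show False
    using assms by (simp add: orthonormal_on_def)
qed

lemma orthonormal_on_coeff_nonzero: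
  assumes orth: "orthonormal_on N f" and "\<exists>j\<in>{1..N}. g j \<noteq> 0"
  shows "\<exists>l\<in>{1..N}. vec_inner N g (f l) \<noteq> 0"
proof (rule ccontr)
  assume "\<not> ?thesis"
  then have "g j = 0" if "j \<in> {1..N}" for j
    using orthonormal_on_expansion[OF orth that, of g] by simp
  then show False
    using assms(2) by blast
qed

lemma mat_vec_adjoint:
  assumes "\<And>i j. i \<in> {1..N} \<Longrightarrow> j \<in> {1..N} \<Longrightarrow> A i j = A j i"
  shows "vec_inner N (mat_vec N A u) v = vec_inner N u (mat_vec N A v)"
proof -
  have "vec_inner N (mat_vec N A u) v
      = (\<Sum>i=1..N. \<Sum>j=1..N. complex_of_real (A i j) * u j * cnj (v i))"
    by (simp add: vec_inner_def mat_vec_def sum_distrib_right)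
  also have "\<dots> = (\<Sum>j=1..N. \<Sum>i=1..N. u j * (complex_of_real (A j i) * cnj (v i)))"
    using assms by (subst sum.swap) (intro sum.cong refl, simp add: mult_ac)
  also have "\<dots> = vec_inner N u (mat_vec N A v)"
    by (simp add: vec_inner_def mat_vec_def sum_distrib_left)
  finally show ?thesis .
qed

lemma symmetric_eigenvalue_pairing:
  assumes "\<And>i j. i \<in> {1..N} \<Longrightarrow> j \<in> {1..N} \<Longrightarrow> A i j = A j i"
    and "\<forall>i\<in>{1..N}. mat_vec N A u i = \<nu> * u i"
    and "\<forall>i\<in>{1..N}. mat_vec N A v i = \<mu> * v i"
  shows "\<nu> * vec_inner N u v = cnj \<mu> * vec_inner N u v"
proof -
  have "\<nu> * vec_inner N u v = vec_inner N (\<lambda>i. \<nu> * u i) v"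
    by (rule vec_inner_scale_left[symmetric])
  also have "\<dots> = vec_inner N (mat_vec N A u) v"
    using assms(2) by (intro vec_inner_cong) auto
  also have "\<dots> = vec_inner N u (mat_vec N A v)"
    using assms(1) by (rule mat_vec_adjoint)
  also have "\<dots> = vec_inner N u (\<lambda>i. \<mu> * v i)"
    using assms(3) by (intro vec_inner_cong) auto
  also have "\<dots> = cnj \<mu> * vec_inner N u v"
    by (rule vec_inner_scale_right)
  finally show ?thesis .
qed

locale symmetric_eigenbasis =
  fixes N :: nat and A :: "nat \<Rightarrow> nat \<Rightarrow> real"
    and f :: "nat \<Rightarrow> nat \<Rightarrow> complex" and \<mu> :: "nat \<Rightarrow> complex"
  assumes symmetric: "\<And>i j. i \<in> {1..N} \<Longrightarrow> j \<in> {1..N} \<Longrightarrow> A i j = A j i"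
    and orthonormal: "orthonormal_on N f"
    and eigenvector: "\<And>l. l \<in> {1..N} \<Longrightarrow> \<forall>i\<in>{1..N}. mat_vec N A (f l) i = \<mu> l * f l i"
begin

lemma eigenvalue_real:
  assumes "l \<in> {1..N}"
  shows "cnj (\<mu> l) = \<mu> l"
  using symmetric_eigenvalue_pairing[OF symmetric eigenvector[OF assms] eigenvector[OF assms]]
    orthonormal assms
  by (simp add: orthonormal_on_def)

lemma coeff_eq_0_if_eigenvalue_neq:
  assumes "\<forall>i\<in>{1..N}. mat_vec N A g i = \<nu> * g i" "l \<in> {1..N}" "\<nu> \<noteq> \<mu> l"
  shows "vec_inner N g (f l) = 0"
  using symmetric_eigenvalue_pairing[OF symmetric assms(1) eigenvector[OF assms(2)]]
    eigenvalue_real[OF assms(2)] assms(3)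
  by simp

lemma eigenvalue_in_basis:
  assumes "\<forall>i\<in>{1..N}. mat_vec N A g i = \<nu> * g i" "\<exists>j\<in>{1..N}. g j \<noteq> 0"
  shows "\<exists>l\<in>{1..N}. \<nu> = \<mu> l \<and> vec_inner N g (f l) \<noteq> 0"
  using orthonormal_on_coeff_nonzero[OF orthonormal assms(2)]
    coeff_eq_0_if_eigenvalue_neq[OF assms(1)] by blast

text \<open>Every real eigenvalue of A occurs among the \<mu> l, so N distinct eigenvalues leave no
  room for repetitions.\<close>
lemma inj_on_eigenvalues:
  assumes "has_distinct_eigenvalues_on {1..N} A"
  shows "inj_on \<mu> {1..N}"
proof -
  define E where "E = {m. is_eigenvalue_on {1..N} A m}"
  have "complex_of_real ` E \<subseteq> \<mu> ` {1..N}"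
  proof
    fix z assume "z \<in> complex_of_real ` E"
    then obtain m v where z: "z = complex_of_real m" and v: "\<exists>i\<in>{1..N}. v i \<noteq> 0"
      "\<forall>i\<in>{1..N}. (\<Sum>j\<in>{1..N}. A i j * v j) = m * v i"
      unfolding E_def is_eigenvalue_on_def by blast
    have "\<forall>i\<in>{1..N}. mat_vec N A (\<lambda>j. complex_of_real (v j)) i = z * complex_of_real (v i)"
    proof
      fix i assume "i \<in> {1..N}"
      then have "complex_of_real (\<Sum>j\<in>{1..N}. A i j * v j) = complex_of_real (m * v i)"
        using v(2) by simp
      then show "mat_vec N A (\<lambda>j. complex_of_real (v j)) i = z * complex_of_real (v i)"
        by (simp add: mat_vec_def z)
    qed
    moreover have "\<exists>i\<in>{1..N}. complex_of_real (v i) \<noteq> 0"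
      using v(1) by simp
    ultimately obtain l where "l \<in> {1..N}" "z = \<mu> l"
      using eigenvalue_in_basis by blast
    then show "z \<in> \<mu> ` {1..N}"
      by blast
  qed
  then have "card (complex_of_real ` E) \<le> card (\<mu> ` {1..N})"
    by (intro card_mono) auto
  moreover have "card (complex_of_real ` E) = card {1..N}"
    using assms by (simp add: card_image inj_on_def has_distinct_eigenvalues_on_def E_def)
  ultimately show ?thesis
    using card_image_le[of "{1..N}" \<mu>] by (intro eq_card_imp_inj_on) auto
qed

lemma eigenvector_iff:
  assumes "inj_on \<mu> {1..N}"
  shows "(\<exists>j\<in>{1..N}. g j \<noteq> 0) \<and> (\<forall>i\<in>{1..N}. mat_vec N A g i = \<nu> * g i)
    \<longleftrightarrow> (\<exists>l\<in>{1..N}. \<exists>c. c \<noteq> 0 \<and> (\<forall>j\<in>{1..N}. g j = c * f l j) \<and> \<nu> = \<mu> l)"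
proof
  assume g: "(\<exists>j\<in>{1..N}. g j \<noteq> 0) \<and> (\<forall>i\<in>{1..N}. mat_vec N A g i = \<nu> * g i)"
  then obtain l where l: "l \<in> {1..N}" "\<nu> = \<mu> l" "vec_inner N g (f l) \<noteq> 0"
    using eigenvalue_in_basis by blast
  have other_coeffs: "vec_inner N g (f l') = 0" if "l' \<in> {1..N}" "l' \<noteq> l" for l'
  proof -
    have "\<nu> \<noteq> \<mu> l'"
      using inj_onD[OF assms _ that(1) l(1)] that(2) l(2) by auto
    then show ?thesis
      using coeff_eq_0_if_eigenvalue_neq[OF conjunct2[OF g] that(1)] by blast
  qed
  have "g j = vec_inner N g (f l) * f l j" if "j \<in> {1..N}" for j
  proof -
    have "g j = (\<Sum>l'=1..N. vec_inner N g (f l') * f l' j)"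
      using orthonormal_on_expansion[OF orthonormal that] .
    also have "\<dots> = (\<Sum>l'\<in>{1..N}. if l' = l then vec_inner N g (f l) * f l j else 0)"
      using other_coeffs by (intro sum.cong) auto
    also have "\<dots> = vec_inner N g (f l) * f l j"
      using l(1) by simp
    finally show ?thesis .
  qed
  then show "\<exists>l\<in>{1..N}. \<exists>c. c \<noteq> 0 \<and> (\<forall>j\<in>{1..N}. g j = c * f l j) \<and> \<nu> = \<mu> l"
    using l by blast
next
  assume "\<exists>l\<in>{1..N}. \<exists>c. c \<noteq> 0 \<and> (\<forall>j\<in>{1..N}. g j = c * f l j) \<and> \<nu> = \<mu> l"
  then obtain l c where l: "l \<in> {1..N}" "c \<noteq> 0" "\<forall>j\<in>{1..N}. g j = c * f l j" "\<nu> = \<mu> l"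
    by blast
  have "mat_vec N A g i = \<nu> * g i" if "i \<in> {1..N}" for i
  proof -
    have "mat_vec N A g i = mat_vec N A (\<lambda>j. c * f l j) i"
      using l(3) by (intro mat_vec_cong) auto
    also have "\<dots> = c * mat_vec N A (f l) i"
      by (rule mat_vec_scale)
    finally show ?thesis
      using eigenvector[OF l(1)] l(3,4) that by simp
  qed
  moreover have "\<exists>j\<in>{1..N}. g j \<noteq> 0"
    using orthonormal_on_nonzero[OF orthonormal l(1)] l(2,3) by auto
  ultimately show "(\<exists>j\<in>{1..N}. g j \<noteq> 0) \<and> (\<forall>i\<in>{1..N}. mat_vec N A g i = \<nu> * g i)"
    by blast
qed

end

lemma L2_inner_scale_left:
  assumes "\<forall>j\<in>{1..N}. \<forall>x. G' j x = c * G j x"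
  shows "L2_inner N G' H = c * L2_inner N G H"
proof -
  have "integral {0..1} (\<lambda>x. G' j x * cnj (H j x)) = c * integral {0..1} (\<lambda>x. G j x * cnj (H j x))"
    if "j \<in> {1..N}" for j
    using assms that by (simp add: mult.assoc)
  then have "(\<Sum>j=1..N. integral {0..1} (\<lambda>x. G' j x * cnj (H j x)))
      = (\<Sum>j=1..N. c * integral {0..1} (\<lambda>x. G j x * cnj (H j x)))"
    by (intro sum.cong) auto
  then show ?thesis
    unfolding L2_inner_def by (simp add: sum_distrib_left)
qed

lemma L2_inner_scale_right:
  assumes "\<forall>j\<in>{1..N}. \<forall>x. G' j x = c * G j x"
  shows "L2_inner N H G' = cnj c * L2_inner N H G"
proof -
  have "integral {0..1} (\<lambda>x. H j x * cnj (G' j x)) = cnj c * integral {0..1} (\<lambda>x. H j x * cnj (G j x))"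
    if "j \<in> {1..N}" for j
    using assms that by (simp add: mult_ac)
  then have "(\<Sum>j=1..N. integral {0..1} (\<lambda>x. H j x * cnj (G' j x)))
      = (\<Sum>j=1..N. cnj c * integral {0..1} (\<lambda>x. H j x * cnj (G j x)))"
    by (intro sum.cong) auto
  then show ?thesis
    unfolding L2_inner_def by (simp add: sum_distrib_left)
qed

lemma L2_proj_scale:
  assumes "c \<noteq> 0" "\<forall>j\<in>{1..N}. \<forall>x. G' j x = c * G j x" "j \<in> {1..N}"
  shows "L2_proj N G' H j x = L2_proj N G H j x"
proof -
  have "L2_inner N G' G' = c * cnj c * L2_inner N G G"
    using L2_inner_scale_left[OF assms(2)] L2_inner_scale_right[OF assms(2)] by simp
  then show ?thesis
    using assms L2_inner_scale_right[OF assms(2)]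
    by (simp add: L2_proj_def field_simps)
qed

lemma transfer_op_fourier_fun:
  assumes shift: "\<forall>j\<in>{1..N}. k = 0 \<or> \<alpha> j = a" and j: "j \<in> {1..N}"
  shows "transfer_op N (W_eps \<epsilon> A) \<alpha> (fourier_fun g k) j x
    = cis (- 2 * pi * of_int k * a) * fourier_fun (\<lambda>i. g i + \<epsilon> * mat_vec N A g i) k j x"
proof -
  have "(\<Sum>j'=1..N. complex_of_real (W_eps \<epsilon> A j j') * g j')
      = (\<Sum>j'=1..N. (if j = j' then g j' else 0) + \<epsilon> * (complex_of_real (A j j') * g j'))"
    by (intro sum.cong) (auto simp: W_eps_def algebra_simps)
  then have W: "(\<Sum>j'=1..N. complex_of_real (W_eps \<epsilon> A j j') * g j')
      = g j + \<epsilon> * mat_vec N A g j"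
    using j by (simp add: mat_vec_def sum.distrib sum_distrib_left)
  have "transfer_op N (W_eps \<epsilon> A) \<alpha> (fourier_fun g k) j x
      = (\<Sum>j'=1..N. complex_of_real (W_eps \<epsilon> A j j') * g j') * cis (2 * pi * of_int k * (x - \<alpha> j))"
    by (simp add: transfer_op_def fourier_fun_def sum_distrib_right mult.assoc)
  also have "cis (2 * pi * of_int k * (x - \<alpha> j))
      = cis (- 2 * pi * of_int k * a) * cis (2 * pi * of_int k * x)"
    using shift j by (auto simp: cis_mult algebra_simps)
  also have "(\<Sum>j'=1..N. complex_of_real (W_eps \<epsilon> A j j') * g j')
      * (cis (- 2 * pi * of_int k * a) * cis (2 * pi * of_int k * x))
      = cis (- 2 * pi * of_int k * a) * fourier_fun (\<lambda>i. g i + \<epsilon> * mat_vec N A g i) k j x"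
    unfolding W fourier_fun_def by (simp add: mult_ac)
  finally show ?thesis .
qed

lemma is_eigenfunction_transfer_op_fourier_fun_iff:
  assumes shift: "\<forall>j\<in>{1..N}. k = 0 \<or> \<alpha> j = a" and "\<epsilon> \<noteq> 0"
  shows "is_eigenfunction N (transfer_op N (W_eps \<epsilon> A) \<alpha>) (fourier_fun g k) m
    \<longleftrightarrow> (\<exists>j\<in>{1..N}. g j \<noteq> 0)
      \<and> (\<forall>i\<in>{1..N}. mat_vec N A g i = (m / cis (- 2 * pi * of_int k * a) - 1) / \<epsilon> * g i)"
proof -
  define c where "c = cis (- 2 * pi * of_int k * a)"
  have "c \<noteq> 0"
    by (simp add: c_def)
  have "(\<forall>x. u * cis (2 * pi * of_int k * x) = v * cis (2 * pi * of_int k * x)) \<longleftrightarrow> u = v"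
    for u v :: complex
    by (auto dest: spec[of _ 0])
  then have "(\<forall>j\<in>{1..N}. \<forall>x. transfer_op N (W_eps \<epsilon> A) \<alpha> (fourier_fun g k) j x
        = m * fourier_fun g k j x)
      \<longleftrightarrow> (\<forall>j\<in>{1..N}. c * (g j + \<epsilon> * mat_vec N A g j) = m * g j)"
    using transfer_op_fourier_fun[OF shift] by (simp add: fourier_fun_def c_def mult.assoc)
  also have "\<dots> \<longleftrightarrow> (\<forall>i\<in>{1..N}. mat_vec N A g i = (m / c - 1) / \<epsilon> * g i)"
  proof -
    have "c * (u + \<epsilon> * v) = m * u \<longleftrightarrow> v = (m / c - 1) / \<epsilon> * u" for u v :: complex
      using \<open>c \<noteq> 0\<close> \<open>\<epsilon> \<noteq> 0\<close> by (auto simp: field_simps)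
    then show ?thesis
      by simp
  qed
  moreover have "(\<exists>j\<in>{1..N}. \<exists>x. fourier_fun g k j x \<noteq> 0) \<longleftrightarrow> (\<exists>j\<in>{1..N}. g j \<noteq> 0)"
    by (simp add: fourier_fun_def)
  ultimately show ?thesis
    unfolding is_eigenfunction_def c_def by blast
qed

context symmetric_eigenbasis
begin

lemma fourier_eigenfunction_iff:
  assumes "inj_on \<mu> {1..N}" and shift: "\<forall>j\<in>{1..N}. k = 0 \<or> \<alpha> j = a" and "\<epsilon> \<noteq> 0"
  shows "is_eigenfunction N (transfer_op N (W_eps \<epsilon> A) \<alpha>) (fourier_fun g k) m
    \<longleftrightarrow> (\<exists>l\<in>{1..N}. \<exists>c. c \<noteq> 0 \<and> (\<forall>j\<in>{1..N}. g j = c * f l j)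
          \<and> m = cis (- 2 * pi * of_int k * a) * (1 + \<epsilon> * \<mu> l))"
proof -
  define \<nu> where "\<nu> = (m / cis (- 2 * pi * of_int k * a) - 1) / \<epsilon>"
  have "\<nu> = \<mu> l \<longleftrightarrow> m = cis (- 2 * pi * of_int k * a) * (1 + \<epsilon> * \<mu> l)" for l
    using \<open>\<epsilon> \<noteq> 0\<close> unfolding \<nu>_def by (auto simp: field_simps)
  moreover have "is_eigenfunction N (transfer_op N (W_eps \<epsilon> A) \<alpha>) (fourier_fun g k) m
    \<longleftrightarrow> (\<exists>l\<in>{1..N}. \<exists>c. c \<noteq> 0 \<and> (\<forall>j\<in>{1..N}. g j = c * f l j) \<and> \<nu> = \<mu> l)"
    unfolding is_eigenfunction_transfer_op_fourier_fun_iff[OF shift \<open>\<epsilon> \<noteq> 0\<close>] \<nu>_def[symmetric]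
    by (rule eigenvector_iff[OF assms(1)])
  ultimately show ?thesis
    by simp
qed

lemma fourier_basis_eigenfunction:
  assumes "inj_on \<mu> {1..N}" "\<forall>j\<in>{1..N}. k = 0 \<or> \<alpha> j = a" "\<epsilon> \<noteq> 0" "l \<in> {1..N}"
  shows "is_eigenfunction N (transfer_op N (W_eps \<epsilon> A) \<alpha>) (fourier_fun (f l) k)
    (cis (- 2 * pi * of_int k * a) * (1 + \<epsilon> * \<mu> l))"
  using fourier_eigenfunction_iff[OF assms(1-3)] assms(4) by force

lemma fourier_eigenfunction_projection_eq:
  assumes "inj_on \<mu> {1..N}" "\<forall>j\<in>{1..N}. k = 0 \<or> \<alpha> j = a" "\<epsilon> \<noteq> 0" "l \<in> {1..N}"
    and "is_eigenfunction N (transfer_op N (W_eps \<epsilon> A) \<alpha>) (fourier_fun g k)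
      (cis (- 2 * pi * of_int k * a) * (1 + \<epsilon> * \<mu> l))"
    and "j \<in> {1..N}"
  shows "L2_proj N (fourier_fun g k) H j x = L2_proj N (fourier_fun (f l) k) H j x"
proof -
  obtain l' c where l': "l' \<in> {1..N}" "c \<noteq> 0" "\<forall>j\<in>{1..N}. g j = c * f l' j"
      "cis (- 2 * pi * of_int k * a) * (1 + \<epsilon> * \<mu> l) = cis (- 2 * pi * of_int k * a) * (1 + \<epsilon> * \<mu> l')"
    using fourier_eigenfunction_iff[OF assms(1-3)] assms(5) by blast
  then have "\<mu> l = \<mu> l'"
    using \<open>\<epsilon> \<noteq> 0\<close> by simp
  then have "l' = l"
    using inj_onD[OF assms(1) _ assms(4) l'(1)] by simp
  then have "\<forall>j\<in>{1..N}. \<forall>x. fourier_fun g k j x = c * fourier_fun (f l) k j x"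
    using l'(3) by (simp add: fourier_fun_def)
  then show ?thesis
    using L2_proj_scale[OF l'(2) _ assms(6)] by blast
qed

end

lemma banded_single_band:
  assumes "band_width N 1 L" "banded 1 L \<beta> \<alpha>" "j \<in> {1..N}"
  shows "\<alpha> j = \<beta> 1"
  using assms by (simp add: band_width_def banded_def band_def band_end_def)

theorem proposition3p7:
  fixes N S :: nat and L :: "nat \<Rightarrow> nat" and Wd :: "nat \<Rightarrow> nat \<Rightarrow> real"
    and \<beta> \<alpha> :: "nat \<Rightarrow> real" and k :: int
    and f :: "nat \<Rightarrow> nat \<Rightarrow> complex" and lam :: "nat \<Rightarrow> complex"
  assumes "1 \<le> N" and "1 \<le> S" and "S \<le> N"
    and "band_width N S L"
    and "admissible N S L Wd"
    and "\<beta> \<in> Gamma_set S"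
    and "banded S L \<beta> \<alpha>"
    and "S = 1 \<or> k = 0"
    and orthonormal: "\<forall>l\<in>{1..N}. \<forall>m\<in>{1..N}.
           (\<Sum>j=1..N. f l j * cnj (f m j)) = (if l = m then 1 else 0)"
    and eigen: "\<forall>l\<in>{1..N}. \<forall>i\<in>{1..N}.
           (\<Sum>j=1..N. cis (- 2 * pi * of_int k * \<beta> 1) * complex_of_real (Wd i j) * f l j)
             = lam l * f l i"
  shows "\<forall>\<epsilon>>0.
     (\<forall>l\<in>{1..N}. is_eigenfunction N (transfer_op N (W_eps \<epsilon> Wd) \<alpha>) (fourier_fun (f l) k)
                   (cis (- 2 * pi * of_int k * \<beta> 1) + complex_of_real \<epsilon> * lam l))
   \<and> (\<forall>g mu. is_eigenfunction N (transfer_op N (W_eps \<epsilon> Wd) \<alpha>) (fourier_fun g k) mu \<longrightarrow>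
        (\<exists>l\<in>{1..N}. \<exists>c. (\<forall>j\<in>{1..N}. g j = c * f l j)
            \<and> mu = cis (- 2 * pi * of_int k * \<beta> 1) + complex_of_real \<epsilon> * lam l))
   \<and> (\<forall>l\<in>{1..N}. \<forall>g. is_eigenfunction N (transfer_op N (W_eps \<epsilon> Wd) \<alpha>) (fourier_fun g k)
            (cis (- 2 * pi * of_int k * \<beta> 1) + complex_of_real \<epsilon> * lam l) \<longrightarrow>
        (\<forall>H. \<forall>j\<in>{1..N}. \<forall>x. L2_proj N (fourier_fun g k) H j x = L2_proj N (fourier_fun (f l) k) H j x))"
proof -
  define c where "c = cis (- 2 * pi * of_int k * \<beta> 1)"
  have "c \<noteq> 0"
    by (simp add: c_def)
  have shift: "\<forall>j\<in>{1..N}. k = 0 \<or> \<alpha> j = \<beta> 1"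
    using banded_single_band assms(4,7,8) by blast
  have eigenvector: "\<forall>i\<in>{1..N}. mat_vec N Wd (f l) i = lam l / c * f l i" if "l \<in> {1..N}" for l
    using eigen that \<open>c \<noteq> 0\<close>
    by (simp add: mat_vec_def c_def sum_distrib_left mult.assoc field_simps)
  interpret symmetric_eigenbasis N Wd f "\<lambda>l. lam l / c"
    using assms(5) orthonormal eigenvector
    by unfold_locales (auto simp: admissible_def orthonormal_on_def vec_inner_def)
  have inj: "inj_on (\<lambda>l. lam l / c) {1..N}"
    using inj_on_eigenvalues assms(5) by (simp add: admissible_def)
  have eigenvalue: "c * (1 + \<epsilon> * (lam l / c)) = c + \<epsilon> * lam l" for \<epsilon> l
    using \<open>c \<noteq> 0\<close> by (simp add: field_simps)
  show ?thesis
    using fourier_basis_eigenfunction[OF inj shift, folded c_def, unfolded eigenvalue]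
      fourier_eigenfunction_iff[OF inj shift, folded c_def, unfolded eigenvalue]
      fourier_eigenfunction_projection_eq[OF inj shift, folded c_def, unfolded eigenvalue]
    unfolding c_def[symmetric] by (metis less_irrefl)
qed

end
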